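(* Let $t_i=i^\alpha$ for $i\ge1$ with $0<\alpha\le1/3$, and let $n(t)=\#\{k\ge1: t_k\le t\}=[t^{1/\alpha}]$ for $t\ge 0$. Let $M\ge1$ be an integer and write \[ I_M(u)=u^3\int_0^{t_M}\frac{n(t)}{t^2(t^2+u^2+ut\sqrt2)}\,dt . \] (i) There is a constant $C>0$ depending only on $\alpha$ such that if $u\ge t_M$, then $I_M(u)\ge Cu(M^{1-\alpha}-1)$. (ii) If $0<\alpha<1/3$, there is a constant $C>0$ depending only on $\alpha$ such that for $0\le u\le t_M$, \[ I_M(u)\ge C\left[\frac{u^{1/\alpha}-u}{1-\alpha}+u^3\,\frac{M^{1-3\alpha}-\max(u,1)^{1/\alpha-3}}{1-3\alpha}\right]. \] (iii) If $\alpha=1/3$, there is a constant $C>0$ such that for $0\le u\le t_M$, \[ I_M(u)\ge Cu^3\log\frac{t_M}{\max(u,1)}. \]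
   Context: $[\cdot]$ denotes the integer part. The constants do not depend on $M$ or $u$. *)

theory Defs
  imports "HOL-Analysis.Analysis"
begin

definition tseq :: "real \<Rightarrow> nat \<Rightarrow> real" where
  "tseq \<alpha> i = real i powr \<alpha>"

definition ncount :: "real \<Rightarrow> real \<Rightarrow> nat" where
  "ncount \<alpha> t = card {k::nat. 1 \<le> k \<and> tseq \<alpha> k \<le> t}"

definition IM :: "real \<Rightarrow> nat \<Rightarrow> real \<Rightarrow> real" where
  "IM \<alpha> M u = u ^ 3 * integral {0..tseq \<alpha> M}
      (\<lambda>t. real (ncount \<alpha> t) / (t ^ 2 * (t ^ 2 + u ^ 2 + u * t * sqrt 2)))"

end

theory Submission
  imports Defs
begin

text \<open>
  The counting function vanishes on [0, 1) and satisfies n(t) \<ge> t^(1/\<alpha>) / 2 for t \<ge> 1,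
  while the denominator t^2 + u^2 + \<surd>2 u t is at most 4 max(t, u)^2. Hence I_M(u) is at least
  u^3 times the integral over [1, t_M] of t^(1/\<alpha>) / (8 t^2 max(t, u)^2), which can be computed.
  For u \<ge> t_M the maximum is u throughout, which gives (i). For u \<le> t_M the integral is split
  at max(u, 1): the left piece yields the term in u^(1/\<alpha>) - u, and the right piece is the
  integral of t^(1/\<alpha> - 4) / 8, a power of t_M for \<alpha> < 1/3 and a logarithm for \<alpha> = 1/3.
\<close>

lemma powr_le_powr_iff:
  fixes x y a :: real
  assumes "0 \<le> x" "0 \<le> y" "0 < a"
  shows "x powr a \<le> y powr a \<longleftrightarrow> x \<le> y"
  using assms by (metis leD leI less_eq_real_def powr_less_mono2)

lemma has_integral_powr:
  fixes a b q :: real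
  assumes "0 < a" "a \<le> b" "q \<noteq> -1"
  shows "((\<lambda>t. t powr q) has_integral (b powr (q + 1) - a powr (q + 1)) / (q + 1)) {a..b}"
proof -
  have "((\<lambda>t. t powr q) has_integral b powr (q + 1) / (q + 1) - a powr (q + 1) / (q + 1)) {a..b}"
    using assms
    by (intro fundamental_theorem_of_calculus)
       (auto intro!: derivative_eq_intros simp flip: has_real_derivative_iff_has_vector_derivative)
  then show ?thesis by (simp add: diff_divide_distrib)
qed

lemma has_integral_powr_minus_one:
  fixes a b :: real
  assumes "0 < a" "a \<le> b"
  shows "((\<lambda>t. t powr -1) has_integral ln (b / a)) {a..b}"
proof -
  have "((\<lambda>t. t powr -1) has_integral ln b - ln a) {a..b}"
    using assms
    by (intro fundamental_theorem_of_calculus)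
       (auto intro!: derivative_eq_intros simp: powr_minus_divide
             simp flip: has_real_derivative_iff_has_vector_derivative)
  then show ?thesis using assms by (simp add: ln_div)
qed

lemma powr_minus_le_cube_max:
  fixes u p :: real
  assumes "0 \<le> u" "1 \<le> p"
  shows "u powr p - u \<le> u ^ 3 * (max u 1 powr (p - 1) - 1) / (max u 1) ^ 2"
proof (cases "u \<le> 1")
  case True
  have "u powr p \<le> u"
  proof (cases "u = 0")
    case False
    then have "u powr p \<le> u powr 1" using True assms by (intro powr_mono') auto
    then show ?thesis using assms by simp
  qed simp
  then show ?thesis using True by simp
next
  case False
  then have "u ^ 3 * (u powr (p - 1) - 1) / u ^ 2 = u * u powr (p - 1) - u"
    by (simp add: field_simps power2_eq_square power3_eq_cube)
  also have "\<dots> = u powr p - u"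
    using False by (simp add: powr_diff)
  finally show ?thesis using False by simp
qed

lemma sq_add_sq_add_sqrt2_mult_pos:
  fixes t u :: real
  shows "0 < t \<Longrightarrow> 0 \<le> u \<Longrightarrow> 0 < t ^ 2 + u ^ 2 + u * t * sqrt 2"
  by (intro add_pos_nonneg) auto

lemma sq_add_sq_add_sqrt2_mult_le:
  fixes t u :: real
  assumes "0 \<le> t" "0 \<le> u"
  shows "t ^ 2 + u ^ 2 + u * t * sqrt 2 \<le> 4 * (max t u) ^ 2"
proof -
  have "sqrt 2 \<le> 2" by (rule real_le_lsqrt) auto
  have "t ^ 2 \<le> (max t u) ^ 2" "u ^ 2 \<le> (max t u) ^ 2"
    using assms by (auto intro: power_mono)
  moreover have "u * t * sqrt 2 \<le> max t u * max t u * 2"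
    using assms \<open>sqrt 2 \<le> 2\<close> by (intro mult_mono) auto
  ultimately show ?thesis by (simp add: power2_eq_square)
qed

lemma tseq_le_iff:
  assumes "0 < \<alpha>" "0 \<le> t"
  shows "tseq \<alpha> k \<le> t \<longleftrightarrow> real k \<le> t powr (1/\<alpha>)"
proof -
  have "tseq \<alpha> k \<le> t \<longleftrightarrow> tseq \<alpha> k powr (1/\<alpha>) \<le> t powr (1/\<alpha>)"
    using assms by (simp add: tseq_def powr_le_powr_iff)
  also have "tseq \<alpha> k powr (1/\<alpha>) = real k"
    using assms by (simp add: tseq_def powr_powr)
  finally show ?thesis .
qed

lemma one_le_tseq: "0 \<le> \<alpha> \<Longrightarrow> 1 \<le> k \<Longrightarrow> 1 \<le> tseq \<alpha> k"
  by (simp add: tseq_def ge_one_powr_ge_zero)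

lemma tseq_powr: "0 < \<alpha> \<Longrightarrow> tseq \<alpha> M powr (1/\<alpha> - q) = real M powr (1 - q * \<alpha>)"
  by (simp add: tseq_def powr_powr algebra_simps)

lemma ncount_eq_floor:
  assumes "0 < \<alpha>" "0 \<le> t"
  shows "ncount \<alpha> t = nat \<lfloor>t powr (1/\<alpha>)\<rfloor>"
proof -
  have "{k. 1 \<le> k \<and> tseq \<alpha> k \<le> t} = {1..nat \<lfloor>t powr (1/\<alpha>)\<rfloor>}"
    using assms by (auto simp: tseq_le_iff le_nat_iff le_floor_iff)
  then show ?thesis by (simp add: ncount_def)
qed

lemma ncount_ge_half:
  assumes "0 < \<alpha>" "1 \<le> t"
  shows "t powr (1/\<alpha>) / 2 \<le> ncount \<alpha> t"
proof -
  define x where "x = t powr (1/\<alpha>)"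
  have "1 \<le> x" using assms by (simp add: x_def ge_one_powr_ge_zero)
  then have "1 \<le> real_of_int \<lfloor>x\<rfloor>" by simp
  then have "x / 2 \<le> real_of_int \<lfloor>x\<rfloor>"
    using real_of_int_floor_gt_diff_one[of x] by linarith
  then show ?thesis
    using assms \<open>1 \<le> x\<close> by (simp add: ncount_eq_floor flip: x_def)
qed

lemma ncount_eq_sum_indicator:
  assumes "0 < \<alpha>" "0 \<le> t" "t \<le> tseq \<alpha> M"
  shows "real (ncount \<alpha> t) = (\<Sum>k=1..M. indicator {tseq \<alpha> k..} t)"
proof -
  have "{k. 1 \<le> k \<and> tseq \<alpha> k \<le> t} = {1..M} \<inter> {k. tseq \<alpha> k \<le> t}"
    using assms by (auto simp: tseq_def powr_le_powr_iff dest: order_trans[of _ t])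
  then show ?thesis by (simp add: ncount_def indicator_def of_bool_def[symmetric])
qed

definition IM_integrand :: "real \<Rightarrow> real \<Rightarrow> real \<Rightarrow> real" where
  "IM_integrand \<alpha> u t = real (ncount \<alpha> t) / (t ^ 2 * (t ^ 2 + u ^ 2 + u * t * sqrt 2))"

lemma IM_eq_integral_IM_integrand:
  "IM \<alpha> M u = u ^ 3 * integral {0..tseq \<alpha> M} (IM_integrand \<alpha> u)"
  by (simp add: IM_def IM_integrand_def [abs_def])

lemma IM_integrand_nonneg: "0 \<le> u \<Longrightarrow> 0 \<le> t \<Longrightarrow> 0 \<le> IM_integrand \<alpha> u t"
  by (simp add: IM_integrand_def)

lemma IM_integrand_integrable:
  assumes "0 < \<alpha>" "0 \<le> u"
  shows "IM_integrand \<alpha> u integrable_on {0..tseq \<alpha> M}"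
proof -
  define T where "T = tseq \<alpha> M"
  define g where "g t = 1 / (t ^ 2 * (t ^ 2 + u ^ 2 + u * t * sqrt 2))" for t
  have "(\<lambda>t. indicator {tseq \<alpha> k..T} t * g t) integrable_on {0..T}" if "1 \<le> k" for k
  proof (rule integrable_on_superset)
    have "1 \<le> tseq \<alpha> k" using assms that by (simp add: one_le_tseq)
    then have "t ^ 2 * (t ^ 2 + u ^ 2 + u * t * sqrt 2) \<noteq> 0" if "t \<in> {tseq \<alpha> k..T}" for t
      using assms that sq_add_sq_add_sqrt2_mult_pos[of t u] by auto
    then have "continuous_on {tseq \<alpha> k..T} g"
      unfolding g_def by (intro continuous_intros) auto
    then show "(\<lambda>t. indicator {tseq \<alpha> k..T} t * g t) integrable_on {tseq \<alpha> k..T}"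
      by (rule integrable_eq[OF integrable_continuous_interval]) simp
    show "{tseq \<alpha> k..T} \<subseteq> {0..T}" by (auto simp: tseq_def)
  qed simp
  then have "(\<lambda>t. \<Sum>k=1..M. indicator {tseq \<alpha> k..T} t * g t) integrable_on {0..T}"
    by (intro integrable_sum) auto
  then show ?thesis
    unfolding T_def
  proof (rule integrable_eq)
    fix t assume t: "t \<in> {0..tseq \<alpha> M}"
    then have "(\<Sum>k=1..M. indicator {tseq \<alpha> k..tseq \<alpha> M} t * g t)
        = (\<Sum>k=1..M. indicator {tseq \<alpha> k..} t) * g t"
      by (simp add: sum_distrib_right indicator_def)
    also have "\<dots> = IM_integrand \<alpha> u t"
      using assms t ncount_eq_sum_indicator[of \<alpha> t M] by (simp add: IM_integrand_def g_def)
    finally show "(\<Sum>k=1..M. indicator {tseq \<alpha> k..tseq \<alpha> M} t * g t) = IM_integrand \<alpha> u t" .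
  qed
qed

definition IM_minorant :: "real \<Rightarrow> real \<Rightarrow> real \<Rightarrow> real" where
  "IM_minorant \<alpha> u t = t powr (1/\<alpha>) / (8 * t ^ 2 * (max t u) ^ 2)"

lemma IM_minorant_le_IM_integrand:
  assumes "0 < \<alpha>" "1 \<le> t" "0 \<le> u"
  shows "IM_minorant \<alpha> u t \<le> IM_integrand \<alpha> u t"
proof -
  have D: "0 < t ^ 2 + u ^ 2 + u * t * sqrt 2"
    using assms by (intro sq_add_sq_add_sqrt2_mult_pos) auto
  have "IM_minorant \<alpha> u t = (t powr (1/\<alpha>) / 2) / (t ^ 2 * (4 * (max t u) ^ 2))"
    by (simp add: IM_minorant_def)
  also have "\<dots> \<le> (t powr (1/\<alpha>) / 2) / (t ^ 2 * (t ^ 2 + u ^ 2 + u * t * sqrt 2))"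
    using assms D sq_add_sq_add_sqrt2_mult_le[of t u]
    by (intro divide_left_mono mult_left_mono mult_pos_pos) auto
  also have "\<dots> \<le> IM_integrand \<alpha> u t"
    unfolding IM_integrand_def using assms D ncount_ge_half[of \<alpha> t]
    by (intro divide_right_mono) auto
  finally show ?thesis .
qed

lemma IM_ge_integral_IM_minorant:
  assumes "0 < \<alpha>" "0 \<le> u" "(IM_minorant \<alpha> u has_integral J) {1..tseq \<alpha> M}"
  shows "u ^ 3 * J \<le> IM \<alpha> M u"
proof -
  define T where "T = tseq \<alpha> M"
  have int: "IM_integrand \<alpha> u integrable_on {0..T}"
    using assms(1,2) unfolding T_def by (rule IM_integrand_integrable)
  then have "IM_integrand \<alpha> u integrable_on {1..T}"
    by (rule integrable_on_subinterval) auto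
  then have "J \<le> integral {1..T} (IM_integrand \<alpha> u)"
    using assms IM_minorant_le_IM_integrand unfolding T_def
    by (intro has_integral_le[OF assms(3) integrable_integral]) auto
  also have "\<dots> \<le> integral {0..T} (IM_integrand \<alpha> u)"
    using assms int \<open>IM_integrand \<alpha> u integrable_on {1..T}\<close>
    by (intro integral_subset_le) (auto simp: IM_integrand_nonneg)
  finally show ?thesis
    using assms by (simp add: IM_eq_integral_IM_integrand T_def mult_left_mono)
qed

lemma IM_minorant_eq_powr:
  assumes "0 < t"
  shows "IM_minorant \<alpha> u t = t powr (1/\<alpha> - 2) / (8 * (max t u) ^ 2)"
  using assms by (simp add: IM_minorant_def powr_diff powr_numeral)

lemma IM_minorant_has_integral_large_u:
  assumes "0 < \<alpha>" "\<alpha> \<noteq> 1" "1 \<le> T" "T \<le> u"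
  shows "(IM_minorant \<alpha> u has_integral
           (T powr (1/\<alpha> - 1) - 1) / (8 * u ^ 2 * (1/\<alpha> - 1))) {1..T}"
proof -
  have "1/\<alpha> - 2 \<noteq> -1" using assms by (simp add: field_simps)
  from has_integral_divide[OF has_integral_powr[OF _ \<open>1 \<le> T\<close> this], of "8 * u ^ 2"]
  have powr_int: "((\<lambda>t. t powr (1/\<alpha> - 2) / (8 * u ^ 2)) has_integral
          (T powr (1/\<alpha> - 1) - 1) / (8 * u ^ 2 * (1/\<alpha> - 1))) {1..T}"
    by (simp add: mult.commute)
  show ?thesis
    by (rule has_integral_eq[OF _ powr_int]) (use assms in \<open>auto simp: IM_minorant_eq_powr max_def\<close>)
qed

lemma IM_minorant_has_integral_small_u:
  assumes "0 < \<alpha>" "\<alpha> \<noteq> 1" "max u 1 \<le> T"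
    and G: "((\<lambda>t. t powr (1/\<alpha> - 4)) has_integral G) {max u 1..T}"
  shows "(IM_minorant \<alpha> u has_integral
           (max u 1 powr (1/\<alpha> - 1) - 1) / (8 * (max u 1) ^ 2 * (1/\<alpha> - 1)) + G / 8) {1..T}"
proof -
  define v where "v = max u 1"
  have "1/\<alpha> - 2 \<noteq> -1" using assms by (simp add: field_simps)
  from has_integral_divide[OF has_integral_powr[OF _ _ this], of 1 v "8 * v ^ 2"]
  have powr_int: "((\<lambda>t. t powr (1/\<alpha> - 2) / (8 * v ^ 2)) has_integral
          (v powr (1/\<alpha> - 1) - 1) / (8 * v ^ 2 * (1/\<alpha> - 1))) {1..v}"
    by (simp add: v_def mult.commute)
  have "max t u = v" if "t \<in> {1..v}" for t
    \<comment> \<open>for u < 1 the interval [1, v] is the single point 1\<close>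
    using that by (auto simp: v_def)
  then have near: "(IM_minorant \<alpha> u has_integral
                   (v powr (1/\<alpha> - 1) - 1) / (8 * v ^ 2 * (1/\<alpha> - 1))) {1..v}"
    by (intro has_integral_eq[OF _ powr_int]) (auto simp: IM_minorant_eq_powr)
  have "IM_minorant \<alpha> u t = t powr (1/\<alpha> - 4) / 8" if "t \<in> {v..T}" for t
  proof -
    have "0 < t" "max t u = t" using that by (auto simp: v_def)
    then have "IM_minorant \<alpha> u t = t powr (1/\<alpha> - 4 + 2) / (8 * t ^ 2)"
      by (simp add: IM_minorant_eq_powr)
    also have "\<dots> = t powr (1/\<alpha> - 4) / 8"
      using \<open>0 < t\<close> by (simp only: powr_add powr_numeral) simp
    finally show ?thesis .
  qed
  then have far: "(IM_minorant \<alpha> u has_integral G / 8) {v..T}"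
    by (intro has_integral_eq[OF _ has_integral_divide[OF G[folded v_def]]]) simp
  show ?thesis
    using has_integral_combine[OF _ _ near far] assms by (simp add: v_def)
qed

lemma IM_lower_bound_large_u:
  assumes "0 < \<alpha>" "\<alpha> < 1" "1 \<le> M" "tseq \<alpha> M \<le> u"
  shows "\<alpha> / (8 * (1 - \<alpha>)) * u * (real M powr (1 - \<alpha>) - 1) \<le> IM \<alpha> M u"
proof -
  have "1 \<le> tseq \<alpha> M" using assms by (simp add: one_le_tseq)
  with assms have "u ^ 3 * ((tseq \<alpha> M powr (1/\<alpha> - 1) - 1) / (8 * u ^ 2 * (1/\<alpha> - 1))) \<le> IM \<alpha> M u"
    by (intro IM_ge_integral_IM_minorant IM_minorant_has_integral_large_u) auto
  moreover have "u ^ 3 * ((tseq \<alpha> M powr (1/\<alpha> - 1) - 1) / (8 * u ^ 2 * (1/\<alpha> - 1)))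
      = \<alpha> / (8 * (1 - \<alpha>)) * u * (real M powr (1 - \<alpha>) - 1)"
    using assms \<open>1 \<le> tseq \<alpha> M\<close> tseq_powr[of \<alpha> M 1]
    by (simp add: field_simps power2_eq_square power3_eq_cube)
  ultimately show ?thesis by simp
qed

lemma IM_lower_bound_subcritical:
  assumes "0 < \<alpha>" "\<alpha> < 1/3" "1 \<le> M" "0 \<le> u" "u \<le> tseq \<alpha> M"
  shows "\<alpha> / 8 * ((u powr (1/\<alpha>) - u) / (1 - \<alpha>)
           + u ^ 3 * (real M powr (1 - 3*\<alpha>) - max u 1 powr (1/\<alpha> - 3)) / (1 - 3*\<alpha>))
         \<le> IM \<alpha> M u"
proof -
  define T where "T = tseq \<alpha> M"
  define v where "v = max u 1"
  define A where "A = (v powr (1/\<alpha> - 1) - 1) / (8 * v ^ 2 * (1/\<alpha> - 1))"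
  define G where "G = (T powr (1/\<alpha> - 3) - v powr (1/\<alpha> - 3)) / (1/\<alpha> - 3)"
  have "v \<le> T" using assms one_le_tseq[of \<alpha> M] by (simp add: v_def T_def)
  have "1/\<alpha> - 4 \<noteq> -1" using assms by (simp add: field_simps)
  with \<open>v \<le> T\<close> have "((\<lambda>t. t powr (1/\<alpha> - 4)) has_integral G) {v..T}"
    using has_integral_powr[of v T "1/\<alpha> - 4"] by (simp add: G_def v_def)
  with assms \<open>v \<le> T\<close> have IM: "u ^ 3 * (A + G / 8) \<le> IM \<alpha> M u"
    unfolding A_def T_def v_def
    by (intro IM_ge_integral_IM_minorant IM_minorant_has_integral_small_u) auto
  have "1 \<le> 1/\<alpha>" using assms by (simp add: field_simps)
  have "\<alpha> / (8 * (1 - \<alpha>)) * (u powr (1/\<alpha>) - u)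
      \<le> \<alpha> / (8 * (1 - \<alpha>)) * (u ^ 3 * (v powr (1/\<alpha> - 1) - 1) / v ^ 2)"
    using assms powr_minus_le_cube_max[OF \<open>0 \<le> u\<close> \<open>1 \<le> 1/\<alpha>\<close>]
    by (intro mult_left_mono) (auto simp: v_def)
  also have "\<dots> = u ^ 3 * A"
    using assms by (simp add: A_def field_simps)
  finally have near: "\<alpha> / 8 * ((u powr (1/\<alpha>) - u) / (1 - \<alpha>)) \<le> u ^ 3 * A" by simp
  have far: "\<alpha> / 8 * (u ^ 3 * (real M powr (1 - 3*\<alpha>) - v powr (1/\<alpha> - 3)) / (1 - 3*\<alpha>))
      = u ^ 3 * (G / 8)"
    using assms tseq_powr[of \<alpha> M 3] by (simp add: G_def T_def field_simps)
  show ?thesis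
    using IM near far unfolding v_def distrib_left by linarith
qed

lemma IM_lower_bound_critical:
  assumes "1 \<le> M" "0 \<le> u" "u \<le> tseq (1/3) M"
  shows "1 / 8 * u ^ 3 * ln (tseq (1/3) M / max u 1) \<le> IM (1/3) M u"
proof -
  define T where "T = tseq (1/3) M"
  define v where "v = max u 1"
  define A where "A = (v powr (1/(1/3) - 1) - 1) / (8 * v ^ 2 * (1/(1/3) - 1))"
  have "v \<le> T" using assms one_le_tseq[of "1/3" M] by (simp add: v_def T_def)
  then have "((\<lambda>t. t powr (1/(1/3) - 4)) has_integral ln (T / v)) {v..T}"
    using has_integral_powr_minus_one[of v T] by (simp add: v_def)
  with assms \<open>v \<le> T\<close> have IM: "u ^ 3 * (A + ln (T / v) / 8) \<le> IM (1/3) M u"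
    unfolding A_def T_def v_def
    by (intro IM_ge_integral_IM_minorant IM_minorant_has_integral_small_u) auto
  have "1 \<le> v" by (simp add: v_def)
  then have "0 \<le> A" by (simp add: A_def)
  then have "u ^ 3 * (ln (T / v) / 8) \<le> u ^ 3 * (A + ln (T / v) / 8)"
    using assms by (intro mult_left_mono) auto
  with IM show ?thesis by (simp add: T_def v_def)
qed

theorem lemma2p2:
  fixes \<alpha> :: real
  assumes "0 < \<alpha>" and "\<alpha> \<le> 1/3"
  shows "(\<exists>C>0. \<forall>M::nat. \<forall>u::real. 1 \<le> M \<longrightarrow> tseq \<alpha> M \<le> u \<longrightarrow>
            IM \<alpha> M u \<ge> C * u * (real M powr (1 - \<alpha>) - 1))
       \<and> (\<alpha> < 1/3 \<longrightarrow> (\<exists>C>0. \<forall>M::nat. \<forall>u::real. 1 \<le> M \<longrightarrow> 0 \<le> u \<longrightarrow> u \<le> tseq \<alpha> M \<longrightarrow>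
            IM \<alpha> M u \<ge> C * ((u powr (1/\<alpha>) - u) / (1 - \<alpha>)
              + u ^ 3 * (real M powr (1 - 3*\<alpha>) - max u 1 powr (1/\<alpha> - 3)) / (1 - 3*\<alpha>))))
       \<and> (\<alpha> = 1/3 \<longrightarrow> (\<exists>C>0. \<forall>M::nat. \<forall>u::real. 1 \<le> M \<longrightarrow> 0 \<le> u \<longrightarrow> u \<le> tseq \<alpha> M \<longrightarrow>
            IM \<alpha> M u \<ge> C * u ^ 3 * ln (tseq \<alpha> M / max u 1)))"
proof (intro conjI impI)
  show "\<exists>C>0. \<forall>M::nat. \<forall>u::real. 1 \<le> M \<longrightarrow> tseq \<alpha> M \<le> u \<longrightarrow>
          IM \<alpha> M u \<ge> C * u * (real M powr (1 - \<alpha>) - 1)"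
    using assms IM_lower_bound_large_u[of \<alpha>] by (intro exI[of _ "\<alpha> / (8 * (1 - \<alpha>))"]) auto
next
  assume "\<alpha> < 1/3"
  then show "\<exists>C>0. \<forall>M::nat. \<forall>u::real. 1 \<le> M \<longrightarrow> 0 \<le> u \<longrightarrow> u \<le> tseq \<alpha> M \<longrightarrow>
          IM \<alpha> M u \<ge> C * ((u powr (1/\<alpha>) - u) / (1 - \<alpha>)
            + u ^ 3 * (real M powr (1 - 3*\<alpha>) - max u 1 powr (1/\<alpha> - 3)) / (1 - 3*\<alpha>))"
    using assms IM_lower_bound_subcritical[of \<alpha>] by (intro exI[of _ "\<alpha> / 8"]) auto
next
  assume "\<alpha> = 1/3"
  show "\<exists>C>0. \<forall>M::nat. \<forall>u::real. 1 \<le> M \<longrightarrow> 0 \<le> u \<longrightarrow> u \<le> tseq \<alpha> M \<longrightarrow>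
          IM \<alpha> M u \<ge> C * u ^ 3 * ln (tseq \<alpha> M / max u 1)"
    unfolding \<open>\<alpha> = 1/3\<close> using IM_lower_bound_critical by (intro exI[of _ "1 / 8"]) auto
qed

end
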